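(* $(U_0,\alpha_N\colon N\otimes U_0\to U_0)$ is a corecursive algebra for the functor $N\otimes-$ on $\mathsf{SquaSet}$.
   Context: Let $M_0=\{(r,s)\in[0,1]^2: r\in\{0,1\}\text{ or } s\in\{0,1\}\}$. A square set is a pair $(X,S_X)$ with $X$ a set and $S_X\colon M_0\to X$ injective; $\mathsf{SquaSet}$ has square sets as objects and maps $f$ with $f\circ S_X=S_Y$ as morphisms. Let $N=\{0,1,2\}^2$, also viewed as points of $\mathbb{R}^2$. For a square set $X$, $N\otimes X=(N\times X)/\!\sim$, where $\sim$ is the equivalence relation generated by $(m,S_X(p))\sim(n,S_X(q))$ whenever $m,n\in N$ differ by exactly $1$ in exactly one coordinate and $(m+p)/3=(n+q)/3$; $n\otimes x$ is the class of $(n,x)$; $S_{N\otimes X}(p)=n\otimes S_X(3p-n)$ for any $n\in N$ with $p\in(n+[0,1]^2)/3$; $(N\otimes f)(n\otimes x)=n\otimes f(x)$. $U_0=[0,1]^2$ with $S_{U_0}$ the inclusion, and $\alpha_N(n\otimes z)=\frac13(n+z)$. An algebra $(A,a\colon FA\to A)$ is corecursive if for every coalgebra $e\colon X\to FX$ there is a unique morphism $e^\dagger\colon X\to A$ with $e^\dagger=a\circ Fe^\dagger\circ e$. *)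

theory Defs
  imports "HOL-Analysis.Analysis"
begin

definition M0 :: "(real \<times> real) set" where
  "M0 = {(r, s). r \<in> {0..1} \<and> s \<in> {0..1} \<and> (r \<in> {0, 1} \<or> s \<in> {0, 1})}"

definition is_square_set :: "'x set \<Rightarrow> (real \<times> real \<Rightarrow> 'x) \<Rightarrow> bool" where
  "is_square_set X S \<longleftrightarrow> S \<in> M0 \<rightarrow> X \<and> inj_on S M0"

definition sq_mor :: "'x set \<Rightarrow> (real \<times> real \<Rightarrow> 'x) \<Rightarrow> 'y set \<Rightarrow> (real \<times> real \<Rightarrow> 'y)
    \<Rightarrow> ('x \<Rightarrow> 'y) \<Rightarrow> bool" where
  "sq_mor X S Y T f \<longleftrightarrow> f \<in> X \<rightarrow> Y \<and> (\<forall>p\<in>M0. f (S p) = T p)"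

definition Nidx :: "(int \<times> int) set" where
  "Nidx = {0, 1, 2} \<times> {0, 1, 2}"

definition ptN :: "int \<times> int \<Rightarrow> real \<times> real" where
  "ptN n = (of_int (fst n), of_int (snd n))"

definition adjN :: "int \<times> int \<Rightarrow> int \<times> int \<Rightarrow> bool" where
  "adjN m n \<longleftrightarrow> m \<in> Nidx \<and> n \<in> Nidx \<and>
     ((\<bar>fst m - fst n\<bar> = 1 \<and> snd m = snd n) \<or> (fst m = fst n \<and> \<bar>snd m - snd n\<bar> = 1))"

definition tens_gen :: "'x set \<Rightarrow> (real \<times> real \<Rightarrow> 'x) \<Rightarrow> (((int \<times> int) \<times> 'x) \<times> ((int \<times> int) \<times> 'x)) set" where
  "tens_gen X S = {((m, S p), (n, S q)) | m n p q. adjN m n \<and> p \<in> M0 \<and> q \<in> M0 \<and>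
      (1/3) *\<^sub>R (ptN m + p) = (1/3) *\<^sub>R (ptN n + q)} \<inter> ((Nidx \<times> X) \<times> (Nidx \<times> X))"

definition tens_rel :: "'x set \<Rightarrow> (real \<times> real \<Rightarrow> 'x) \<Rightarrow> (((int \<times> int) \<times> 'x) \<times> ((int \<times> int) \<times> 'x)) set" where
  "tens_rel X S = (tens_gen X S \<union> (tens_gen X S)\<inverse> \<union> Id_on (Nidx \<times> X))\<^sup>*"

definition tens_set :: "'x set \<Rightarrow> (real \<times> real \<Rightarrow> 'x) \<Rightarrow> ((int \<times> int) \<times> 'x) set set" where
  "tens_set X S = (Nidx \<times> X) // tens_rel X S"

definition tens_el :: "'x set \<Rightarrow> (real \<times> real \<Rightarrow> 'x) \<Rightarrow> int \<times> int \<Rightarrow> 'x \<Rightarrow> ((int \<times> int) \<times> 'x) set" where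
  "tens_el X S n x = tens_rel X S `` {(n, x)}"

definition sub_sq :: "int \<times> int \<Rightarrow> (real \<times> real) set" where
  "sub_sq n = {(1/3) *\<^sub>R (ptN n + z) | z. z \<in> {0..1} \<times> {0..1}}"

text \<open>S_{N \<otimes> X}(p) = n \<otimes> S_X(3p - n) for any n with p in (n + [0,1]^2)/3.\<close>
definition tens_S :: "'x set \<Rightarrow> (real \<times> real \<Rightarrow> 'x) \<Rightarrow> real \<times> real \<Rightarrow> ((int \<times> int) \<times> 'x) set" where
  "tens_S X S p = (let n = (SOME n. n \<in> Nidx \<and> p \<in> sub_sq n)
                   in tens_el X S n (S (3 *\<^sub>R p - ptN n)))"

text \<open>(N \<otimes> f)(n \<otimes> x) = n \<otimes> f(x), computed via a representative of the class.\<close>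
definition tens_map :: "'x set \<Rightarrow> (real \<times> real \<Rightarrow> 'x) \<Rightarrow> 'y set \<Rightarrow> (real \<times> real \<Rightarrow> 'y)
    \<Rightarrow> ('x \<Rightarrow> 'y) \<Rightarrow> ((int \<times> int) \<times> 'x) set \<Rightarrow> ((int \<times> int) \<times> 'y) set" where
  "tens_map X S Y T f c = (let nx = (SOME nx. nx \<in> c) in tens_el Y T (fst nx) (f (snd nx)))"

definition U0 :: "(real \<times> real) set" where
  "U0 = {0..1} \<times> {0..1}"

definition S_U0 :: "real \<times> real \<Rightarrow> real \<times> real" where
  "S_U0 p = p"

text \<open>alpha_N(n \<otimes> z) = (n + z)/3, computed via a representative.\<close>
definition alphaN :: "((int \<times> int) \<times> (real \<times> real)) set \<Rightarrow> real \<times> real" where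
  "alphaN c = (let nz = (SOME nz. nz \<in> c) in (1/3) *\<^sub>R (ptN (fst nz) + snd nz))"

end

theory Submission
  imports Defs
begin

text \<open>Choosing a representative (n, x') of each class e x turns the coalgebra into a digit
map x \<mapsto> n and a shift x \<mapsto> x'. On U_0 the value of alpha_N does not depend on the
representative, so a solution is exactly a map h into U_0 with h x = (n + h x')/3: the point
of the square whose ternary digits are read off along the shift orbit of x. Two bounded
solutions differ by a map that the shift contracts by 1/3, hence they agree. On the boundary,
injectivity of S forces the shift of S p to be some S q with (n + q)/3 = p, so h \<circ> S - id is
contracted in the same way and h \<circ> S = S_U0.\<close>

lemma M0_subset_U0: "M0 \<subseteq> U0"
  unfolding M0_def U0_def by auto

lemma U0_diff_norm_le: "u \<in> U0 \<Longrightarrow> v \<in> U0 \<Longrightarrow> norm (u - v) \<le> 2"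
  unfolding U0_def
  by (cases u; cases v) (auto intro!: order.trans[OF norm_Pair_le])

lemma U0_square_set: "is_square_set U0 S_U0"
  unfolding is_square_set_def U0_def S_U0_def M0_def by (auto simp: inj_on_def)

lemma third_in_U0: "n \<in> Nidx \<Longrightarrow> z \<in> U0 \<Longrightarrow> (1/3) *\<^sub>R (ptN n + z) \<in> U0"
  unfolding Nidx_def U0_def ptN_def by (cases z) auto

lemma U0_covered_by_sub_sq:
  assumes "p \<in> U0"
  shows "\<exists>n. n \<in> Nidx \<and> p \<in> sub_sq n"
proof -
  define k where "k t = (if 3*t \<le> 1 then 0 else if 3*t \<le> 2 then 1 else (2::int))" for t :: real
  have k_Nidx: "k t \<in> {0, 1, 2}" for t
    unfolding k_def by auto
  have k_frac: "3*t - of_int (k t) \<in> {0..1}" if "t \<in> {0..1}" for t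
    using that unfolding k_def by auto
  obtain a b where p: "p = (a, b)" "a \<in> {0..1}" "b \<in> {0..1}"
    using assms unfolding U0_def by auto
  have "p = (1/3) *\<^sub>R (ptN (k a, k b) + (3*a - of_int (k a), 3*b - of_int (k b)))"
    unfolding p ptN_def by simp
  then have "p \<in> sub_sq (k a, k b)"
    using k_frac p unfolding sub_sq_def by blast
  moreover have "(k a, k b) \<in> Nidx"
    using k_Nidx unfolding Nidx_def by auto
  ultimately show ?thesis by blast
qed

lemma M0_rescale_sub_sq:
  assumes p: "p \<in> M0" and n: "n \<in> Nidx" "p \<in> sub_sq n"
  shows "3 *\<^sub>R p - ptN n \<in> M0"
proof -
  obtain a b where z: "(a, b) \<in> {0..1} \<times> {0..1}" "p = (1/3) *\<^sub>R (ptN n + (a, b))"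
    using n(2) unfolding sub_sq_def by auto
  obtain i j where ij: "n = (i, j)" "i \<in> {0, 1, 2}" "j \<in> {0, 1, 2}"
    using n(1) unfolding Nidx_def by auto
  have "(of_int i + a)/3 \<in> {0, 1} \<or> (of_int j + b)/3 \<in> {0, 1}"
    using p z ij unfolding M0_def ptN_def by auto
  then have "a \<in> {0, 1} \<or> b \<in> {0, 1}"
    using ij z(1) by auto
  moreover have "3 *\<^sub>R p - ptN n = (a, b)"
    using z(2) by simp
  ultimately show ?thesis
    using z(1) unfolding M0_def by auto
qed

lemma tens_rel_closed: "(a, b) \<in> tens_rel X S \<Longrightarrow> a \<in> Nidx \<times> X \<Longrightarrow> b \<in> Nidx \<times> X"
  unfolding tens_rel_def by (induction rule: rtrancl_induct) (auto simp: tens_gen_def)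

text \<open>A generating pair identifies boundary points of two adjacent subsquares that are the same
point of the big square; injectivity of S recovers that point from either side.\<close>
lemma tens_rel_boundary_point:
  assumes inj: "inj_on S M0" and rel: "(a, b) \<in> tens_rel X S"
    and a: "q \<in> M0" "snd a = S q" "(1/3) *\<^sub>R (ptN (fst a) + q) = P"
  shows "\<exists>q'\<in>M0. snd b = S q' \<and> (1/3) *\<^sub>R (ptN (fst b) + q') = P"
  using rel unfolding tens_rel_def
proof (induction rule: rtrancl_induct)
  case base
  then show ?case using a by blast
next
  case (step b c)
  from step.IH obtain q where q: "q \<in> M0" "snd b = S q" "(1/3) *\<^sub>R (ptN (fst b) + q) = P"
    by blast
  from step.hyps(2) consider "(b, c) \<in> tens_gen X S" | "(c, b) \<in> tens_gen X S" | "b = c"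
    by auto
  then show ?case
  proof cases
    case 1
    then obtain m n p q' where
      bc: "b = (m, S p)" "c = (n, S q')" "p \<in> M0" "q' \<in> M0"
      "(1/3) *\<^sub>R (ptN m + p) = (1/3) *\<^sub>R (ptN n + q')"
      unfolding tens_gen_def by blast
    have "p = q" using inj_onD[OF inj, of p q] bc q by simp
    then show ?thesis using bc q by auto
  next
    case 2
    then obtain m n p q' where
      bc: "c = (m, S p)" "b = (n, S q')" "p \<in> M0" "q' \<in> M0"
      "(1/3) *\<^sub>R (ptN m + p) = (1/3) *\<^sub>R (ptN n + q')"
      unfolding tens_gen_def by blast
    have "q' = q" using inj_onD[OF inj, of q' q] bc q by simp
    then show ?thesis using bc q by auto
  next
    case 3
    then show ?thesis using q by auto
  qed
qed

lemma tens_rel_U0_alpha_eq: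
  assumes "(a, b) \<in> tens_rel U0 S_U0"
  shows "(1/3) *\<^sub>R (ptN (fst a) + snd a) = (1/3) *\<^sub>R (ptN (fst b) + snd b)"
  using assms unfolding tens_rel_def
  by (induction rule: rtrancl_induct) (auto simp: tens_gen_def S_U0_def)

lemma alphaN_tens_el: "alphaN (tens_el U0 S_U0 n z) = (1/3) *\<^sub>R (ptN n + z)"
proof -
  let ?c = "tens_el U0 S_U0 n z"
  have "(n, z) \<in> ?c"
    unfolding tens_el_def tens_rel_def by auto
  then have "(SOME nz. nz \<in> ?c) \<in> ?c"
    by (rule someI)
  then have "((n, z), SOME nz. nz \<in> ?c) \<in> tens_rel U0 S_U0"
    unfolding tens_el_def by auto
  from tens_rel_U0_alpha_eq[OF this] show ?thesis
    unfolding alphaN_def Let_def by simp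
qed

lemma alphaN_sq_mor: "sq_mor (tens_set U0 S_U0) (tens_S U0 S_U0) U0 S_U0 alphaN"
  unfolding sq_mor_def
proof
  show "alphaN \<in> tens_set U0 S_U0 \<rightarrow> U0"
  proof
    fix c assume "c \<in> tens_set U0 S_U0"
    then obtain a where a: "a \<in> Nidx \<times> U0" "c = tens_el U0 S_U0 (fst a) (snd a)"
      unfolding tens_set_def tens_el_def by (auto elim: quotientE)
    then show "alphaN c \<in> U0"
      by (auto simp: alphaN_tens_el third_in_U0)
  qed
  show "\<forall>p\<in>M0. alphaN (tens_S U0 S_U0 p) = S_U0 p"
    unfolding tens_S_def Let_def alphaN_tens_el by (simp add: S_U0_def algebra_simps)
qed

lemma contracted_along_orbit_zero:
  fixes g :: "'a \<Rightarrow> 'b::real_normed_vector"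
  assumes closed: "\<forall>x\<in>Z. f x \<in> Z" and bound: "\<forall>x\<in>Z. norm (g x) \<le> B"
    and contract: "\<forall>x\<in>Z. g x = c *\<^sub>R g (f x)" and c: "\<bar>c\<bar> < 1"
    and x: "x \<in> Z"
  shows "g x = 0"
proof -
  have decay: "\<forall>x\<in>Z. norm (g x) \<le> B * \<bar>c\<bar>^k" for k
  proof (induction k)
    case 0
    then show ?case using bound by simp
  next
    case (Suc k)
    show ?case
    proof
      fix x assume x: "x \<in> Z"
      have "norm (g x) = \<bar>c\<bar> * norm (g (f x))"
        using contract x by (metis norm_scaleR)
      also have "\<dots> \<le> \<bar>c\<bar> * (B * \<bar>c\<bar>^k)"
        using Suc closed x by (simp add: mult_left_mono)
      finally show "norm (g x) \<le> B * \<bar>c\<bar>^Suc k"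
        by (simp add: algebra_simps)
    qed
  qed
  have "(\<lambda>k. B * \<bar>c\<bar>^k) \<longlonglongrightarrow> 0"
    by (intro tendsto_mult_right_zero LIMSEQ_power_zero) (use c in simp)
  then have "norm (g x) \<le> 0"
    by (rule LIMSEQ_le_const) (use decay x in auto)
  then show ?thesis by simp
qed

definition ternary :: "(nat \<Rightarrow> real) \<Rightarrow> real" where
  "ternary a = (\<Sum>k. (1/3)^Suc k * a k)"

lemma
  fixes a :: "nat \<Rightarrow> real"
  assumes digits: "\<And>k. a k \<in> {0..2}"
  shows ternary_in_unit: "ternary a \<in> {0..1}"
    and ternary_unfold: "ternary a = (a 0 + ternary (\<lambda>k. a (Suc k))) / 3"
proof -
  have geom: "(\<lambda>k. 2 * (1/3::real)^Suc k) sums 1"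
    using sums_mult[OF geometric_sums[of "1/3::real"], of "2/3"] by (simp add: mult.assoc)
  have term_le: "(1/3)^Suc k * a k \<le> 2 * (1/3)^Suc k" for k
    using digits[of k] by simp
  have summable: "summable (\<lambda>k. (1/3)^Suc k * a k)"
    by (rule summable_comparison_test'[OF sums_summable[OF geom], of 0])
       (use digits term_le in auto)
  have "0 \<le> ternary a"
    unfolding ternary_def by (rule suminf_nonneg[OF summable]) (use digits in simp)
  moreover have "ternary a \<le> (\<Sum>k. 2 * (1/3::real)^Suc k)"
    unfolding ternary_def by (rule suminf_le[OF term_le summable sums_summable[OF geom]])
  ultimately show "ternary a \<in> {0..1}"
    using sums_unique[OF geom] by simp
  have "summable (\<lambda>k. (1/3)^Suc k * a (Suc k))"
    using summable_ignore_initial_segment[OF summable, of 1] by (simp add: mult.assoc)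
  from suminf_mult[OF this, of "1/3"]
  have "(\<Sum>k. (1/3)^Suc (Suc k) * a (Suc k)) = (1/3) * ternary (\<lambda>k. a (Suc k))"
    unfolding ternary_def by (simp add: mult.assoc)
  then show "ternary a = (a 0 + ternary (\<lambda>k. a (Suc k))) / 3"
    using suminf_split_head[OF summable] unfolding ternary_def by simp
qed

locale square_coalgebra =
  fixes X :: "'x set" and S :: "real \<times> real \<Rightarrow> 'x"
    and e :: "'x \<Rightarrow> ((int \<times> int) \<times> 'x) set"
  assumes square_set: "is_square_set X S"
    and coalgebra: "sq_mor X S (tens_set X S) (tens_S X S) e"
begin

lemma S_inj: "inj_on S M0"
  using square_set unfolding is_square_set_def by simp

lemma S_in_X: "p \<in> M0 \<Longrightarrow> S p \<in> X"
  using square_set unfolding is_square_set_def by auto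

definition rep :: "'x \<Rightarrow> (int \<times> int) \<times> 'x" where
  "rep x = (SOME nx. nx \<in> e x)"

definition digit :: "'x \<Rightarrow> int \<times> int" where
  "digit x = fst (rep x)"

definition shift :: "'x \<Rightarrow> 'x" where
  "shift x = snd (rep x)"

lemma
  assumes x: "x \<in> X"
  shows rep_in_class: "rep x \<in> e x" and rep_in_carrier: "rep x \<in> Nidx \<times> X"
proof -
  have "e x \<in> (Nidx \<times> X) // tens_rel X S"
    using coalgebra x unfolding sq_mor_def tens_set_def by blast
  then obtain a where a: "a \<in> Nidx \<times> X" "e x = tens_rel X S `` {a}"
    by (auto elim: quotientE)
  then have "a \<in> e x"
    unfolding tens_rel_def by auto
  then show rep: "rep x \<in> e x"
    unfolding rep_def by (rule someI)
  then show "rep x \<in> Nidx \<times> X"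
    using a tens_rel_closed[of a "rep x" X S] by auto
qed

lemma digit_in_Nidx: "x \<in> X \<Longrightarrow> digit x \<in> Nidx"
  using rep_in_carrier unfolding digit_def by force

lemma shift_in_X: "x \<in> X \<Longrightarrow> shift x \<in> X"
  using rep_in_carrier unfolding shift_def by force

lemma alphaN_tens_map:
  "alphaN (tens_map X S U0 S_U0 h (e x)) = (1/3) *\<^sub>R (ptN (digit x) + h (shift x))"
  unfolding tens_map_def Let_def digit_def shift_def rep_def by (simp add: alphaN_tens_el)

lemma shift_boundary:
  assumes p: "p \<in> M0"
  shows "\<exists>q\<in>M0. shift (S p) = S q \<and> (1/3) *\<^sub>R (ptN (digit (S p)) + q) = p"
proof -
  define n where "n = (SOME n. n \<in> Nidx \<and> p \<in> sub_sq n)"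
  have n: "n \<in> Nidx" "p \<in> sub_sq n"
    using someI_ex[OF U0_covered_by_sub_sq[OF subsetD[OF M0_subset_U0 p]]]
    unfolding n_def by auto
  have "e (S p) = tens_el X S n (S (3 *\<^sub>R p - ptN n))"
    using coalgebra p unfolding sq_mor_def tens_S_def Let_def n_def by simp
  then have "((n, S (3 *\<^sub>R p - ptN n)), rep (S p)) \<in> tens_rel X S"
    using rep_in_class[OF S_in_X[OF p]] unfolding tens_el_def by simp
  from tens_rel_boundary_point[OF S_inj this M0_rescale_sub_sq[OF p n]]
  show ?thesis
    unfolding digit_def shift_def by (simp add: algebra_simps)
qed

definition solution :: "('x \<Rightarrow> real \<times> real) \<Rightarrow> bool" where
  "solution h \<longleftrightarrow> (\<forall>x\<in>X. h x \<in> U0 \<and> h x = (1/3) *\<^sub>R (ptN (digit x) + h (shift x)))"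

lemma solution_in_U0: "solution h \<Longrightarrow> x \<in> X \<Longrightarrow> h x \<in> U0"
  unfolding solution_def by blast

lemma solution_eq:
  "solution h \<Longrightarrow> x \<in> X \<Longrightarrow> h x = (1/3) *\<^sub>R (ptN (digit x) + h (shift x))"
  unfolding solution_def by blast

lemma solution_restrict:
  assumes h: "solution h"
  shows "solution (restrict h X)"
  unfolding solution_def
proof
  fix x assume x: "x \<in> X"
  from solution_in_U0[OF h x] solution_eq[OF h x]
  show "restrict h X x \<in> U0 \<and>
      restrict h X x = (1/3) *\<^sub>R (ptN (digit x) + restrict h X (shift x))"
    using x shift_in_X by simp
qed

lemma solution_unique:
  assumes h1: "solution h1" and h2: "solution h2" and x: "x \<in> X"
  shows "h1 x = h2 x"
proof -
  have "(\<lambda>x. h1 x - h2 x) x = 0"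
  proof (rule contracted_along_orbit_zero[where f = shift and B = 2 and c = "1/3"])
    show "\<forall>x\<in>X. norm (h1 x - h2 x) \<le> 2"
      using solution_in_U0[OF h1] solution_in_U0[OF h2] by (simp add: U0_diff_norm_le)
    show "\<forall>x\<in>X. h1 x - h2 x = (1/3) *\<^sub>R (h1 (shift x) - h2 (shift x))"
    proof
      fix x assume "x \<in> X"
      from solution_eq[OF h1 this] solution_eq[OF h2 this]
      show "h1 x - h2 x = (1/3) *\<^sub>R (h1 (shift x) - h2 (shift x))"
        by (simp add: algebra_simps)
    qed
  qed (use x shift_in_X in auto)
  then show ?thesis by simp
qed

lemma solution_boundary:
  assumes h: "solution h" and p: "p \<in> M0"
  shows "h (S p) = p"
proof -
  let ?g = "\<lambda>x. h x - inv_into M0 S x"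
  have inv_S: "inv_into M0 S (S q) = q" if "q \<in> M0" for q
    using inv_into_f_f[OF S_inj that] .
  have "?g (S p) = 0"
  proof (rule contracted_along_orbit_zero[where Z = "S ` M0" and f = shift and B = 2 and c = "1/3"])
    show "\<forall>x\<in>S ` M0. shift x \<in> S ` M0"
      using shift_boundary by blast
    show "\<forall>x\<in>S ` M0. norm (?g x) \<le> 2"
    proof
      fix x assume "x \<in> S ` M0"
      then obtain q where q: "q \<in> M0" "x = S q" by blast
      have "h x \<in> U0" "q \<in> U0"
        using solution_in_U0[OF h S_in_X[OF q(1)]] q M0_subset_U0 by auto
      then show "norm (?g x) \<le> 2"
        using U0_diff_norm_le inv_S[OF q(1)] q(2) by simp
    qed
    show "\<forall>x\<in>S ` M0. ?g x = (1/3) *\<^sub>R ?g (shift x)"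
    proof
      fix x assume "x \<in> S ` M0"
      then obtain q where q: "q \<in> M0" "x = S q" by blast
      obtain q' where q': "q' \<in> M0" "shift x = S q'" "(1/3) *\<^sub>R (ptN (digit x) + q') = q"
        using shift_boundary[OF q(1)] q(2) by blast
      from solution_eq[OF h S_in_X[OF q(1)]]
      show "?g x = (1/3) *\<^sub>R ?g (shift x)"
        using q q' inv_S by (auto simp: algebra_simps)
    qed
  qed (use p in auto)
  then show ?thesis using inv_S p by simp
qed

lemma corecursion_iff_solution:
  "sq_mor X S U0 S_U0 h \<and> (\<forall>x\<in>X. h x = alphaN (tens_map X S U0 S_U0 h (e x)))
    \<longleftrightarrow> solution h"
proof
  assume "sq_mor X S U0 S_U0 h \<and> (\<forall>x\<in>X. h x = alphaN (tens_map X S U0 S_U0 h (e x)))"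
  then show "solution h"
    unfolding sq_mor_def solution_def alphaN_tens_map Pi_iff by blast
next
  assume h: "solution h"
  then show "sq_mor X S U0 S_U0 h \<and> (\<forall>x\<in>X. h x = alphaN (tens_map X S U0 S_U0 h (e x)))"
    using solution_in_U0 solution_eq solution_boundary
    unfolding sq_mor_def alphaN_tens_map S_U0_def by blast
qed

definition address :: "'x \<Rightarrow> real \<times> real" where
  "address x = (ternary (\<lambda>k. fst (ptN (digit ((shift ^^ k) x)))),
                ternary (\<lambda>k. snd (ptN (digit ((shift ^^ k) x)))))"

lemma solution_address: "solution address"
  unfolding solution_def
proof
  fix x assume x: "x \<in> X"
  define d where "d y k = ptN (digit ((shift ^^ k) y))" for y k
  have address: "address y = (ternary (\<lambda>k. fst (d y k)), ternary (\<lambda>k. snd (d y k)))" for y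
    unfolding address_def d_def ..
  have d_Suc: "d x (Suc k) = d (shift x) k" for k
    unfolding d_def by (simp only: funpow_Suc_right o_apply)
  have orbit: "(shift ^^ k) x \<in> X" for k
    using x shift_in_X by (induction k) auto
  have digits: "fst (d x k) \<in> {0..2}" "snd (d x k) \<in> {0..2}" for k
    using digit_in_Nidx[OF orbit[of k]] unfolding d_def Nidx_def ptN_def by auto
  have "address x \<in> U0"
    using ternary_in_unit[of "\<lambda>k. fst (d x k)", OF digits(1)]
      ternary_in_unit[of "\<lambda>k. snd (d x k)", OF digits(2)]
    unfolding address U0_def by simp
  moreover have "fst (address x) = (fst (d x 0) + fst (address (shift x))) / 3"
      "snd (address x) = (snd (d x 0) + snd (address (shift x))) / 3"
    using ternary_unfold[of "\<lambda>k. fst (d x k)", OF digits(1)]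
      ternary_unfold[of "\<lambda>k. snd (d x k)", OF digits(2)]
    unfolding address d_Suc by simp_all
  ultimately show "address x \<in> U0 \<and> address x = (1/3) *\<^sub>R (ptN (digit x) + address (shift x))"
    unfolding d_def by (simp add: prod_eq_iff)
qed

end

theorem mainTheorem7:
  fixes X :: "'x set" and S :: "real \<times> real \<Rightarrow> 'x"
    and e :: "'x \<Rightarrow> ((int \<times> int) \<times> 'x) set"
  assumes "is_square_set X S"
    and "sq_mor X S (tens_set X S) (tens_S X S) e"
  shows "is_square_set U0 S_U0
    \<and> sq_mor (tens_set U0 S_U0) (tens_S U0 S_U0) U0 S_U0 alphaN
    \<and> (\<exists>!h. h \<in> extensional X \<and> sq_mor X S U0 S_U0 h
             \<and> (\<forall>x\<in>X. h x = alphaN (tens_map X S U0 S_U0 h (e x))))"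
proof -
  interpret square_coalgebra X S e
    using assms by unfold_locales
  have "\<exists>!h. h \<in> extensional X \<and> solution h"
  proof (rule ex1I)
    show "restrict address X \<in> extensional X \<and> solution (restrict address X)"
      using solution_restrict[OF solution_address] by simp
  next
    show "h = restrict address X" if "h \<in> extensional X \<and> solution h" for h
      using that solution_address solution_unique
      by (intro extensionalityI[of h X]) auto
  qed
  then show ?thesis
    using U0_square_set alphaN_sq_mor unfolding corecursion_iff_solution by blast
qed

end
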